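(* Let $K\ge2$, $r\in[0,1]^K$ with a unique maximizing index $a^*$ (i.e. $r(a^* )>\max_{a\ne a^*}r(a)$), and $g(\theta)=\pi_\theta^\top r$ with $\pi_\theta=\mathrm{softmax}(\theta)$. Let $\theta_1\in\mathbb{R}^K$ be arbitrary and define the normalized policy gradient iterates $\theta_{t+1}=\theta_t+\eta\,\nabla g(\theta_t)/\|\nabla g(\theta_t)\|_2$ with $\eta=1/6$. Then $\inf_{t\ge1}\pi_{\theta_t}(a^* )>0$.
   Context: $\mathrm{softmax}(\theta)(a)=e^{\theta(a)}/\sum_{a'}e^{\theta(a')}$; $\nabla g(\theta)=(\mathrm{diag}(\pi_\theta)-\pi_\theta\pi_\theta^\top)r$, which is nonzero for every $\theta$ under the stated assumptions. *)

theory Defs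
  imports "HOL-Analysis.Analysis"
begin

definition softmax :: "real ^ 'K \<Rightarrow> real ^ 'K" where
  "softmax \<theta> = (\<chi> a. exp (\<theta> $ a) / (\<Sum>a'\<in>UNIV. exp (\<theta> $ a')))"

definition expected_reward :: "real ^ 'K \<Rightarrow> real ^ 'K \<Rightarrow> real" where
  "expected_reward r \<theta> = softmax \<theta> \<bullet> r"

text \<open>Gradient of g, as given in the paper: (diag(pi) - pi pi^T) r,
  i.e. component a is pi(a) * (r(a) - pi^T r).\<close>
definition pg_grad :: "real ^ 'K \<Rightarrow> real ^ 'K \<Rightarrow> real ^ 'K" where
  "pg_grad r \<theta> = (\<chi> a. softmax \<theta> $ a * (r $ a - softmax \<theta> \<bullet> r))"

fun npg_iter :: "real ^ 'K \<Rightarrow> real \<Rightarrow> real ^ 'K \<Rightarrow> nat \<Rightarrow> real ^ 'K" where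
  "npg_iter r \<eta> \<theta>1 0 = \<theta>1"
| "npg_iter r \<eta> \<theta>1 (Suc t) =
     (let \<theta> = npg_iter r \<eta> \<theta>1 t in \<theta> + (\<eta> / norm (pg_grad r \<theta>)) *\<^sub>R pg_grad r \<theta>)"

end

theory Submission
  imports Defs
begin

text \<open>Write \<open>u\<^sub>b = \<theta>(b) - \<theta>(a\<^sup>*)\<close> for the logit gaps and fix \<open>c \<le> 0\<close> with
  \<open>2 K e\<^sup>c \<le> \<Delta>\<close>, where \<open>\<Delta>\<close> is the reward gap. An arm with \<open>u\<^sub>b < c\<close> is less likely
  than \<open>a\<^sup>*\<close>, so its gradient coordinate is below that of \<open>a\<^sup>*\<close> and its gap does not
  grow. The arms with \<open>u\<^sub>b \<ge> c\<close> cannot jointly outgrow \<open>a\<^sup>*\<close>: the gradient sums to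
  zero, each coordinate is at least \<open>-\<pi>(b)\<close>, and the arms below \<open>c\<close> carry mass at most
  \<open>K e\<^sup>c \<pi>(a\<^sup>*) \<le> \<nabla>g(\<theta>)(a\<^sup>*)\<close> as long as \<open>\<pi>(a\<^sup>*) \<le> 1/2\<close> (otherwise every other arm
  is less likely than \<open>a\<^sup>*\<close>). Hence the potential \<open>\<Sum>\<^sub>b\<^sub>\<noteq>\<^sub>a\<^sub>* \<psi>(u\<^sub>b)\<close> with
  \<open>\<psi>(u) = u - c + 2\<eta>\<close> for \<open>u \<ge> c\<close> and \<open>\<psi>(u) = 0\<close> below \<open>c\<close> never increases: its
  jump of \<open>2\<eta>\<close> at \<open>c\<close> absorbs a normalized step, which moves each gap by at most \<open>2\<eta>\<close>.
  So all gaps stay bounded above and \<open>\<pi>(a\<^sup>*)\<close> stays bounded away from zero.\<close>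

lemma softmax_component: "softmax \<theta> $ a = exp (\<theta> $ a) / (\<Sum>b\<in>UNIV. exp (\<theta> $ b))"
  by (simp add: softmax_def)

lemma sum_exp_pos: "0 < (\<Sum>b\<in>UNIV. exp ((\<theta> :: real ^ 'K) $ b))"
  by (rule sum_pos) auto

lemma softmax_pos: "0 < softmax \<theta> $ a"
  using sum_exp_pos[of \<theta>] by (simp add: softmax_component)

lemma sum_softmax: "(\<Sum>a\<in>UNIV. softmax \<theta> $ a) = 1"
  using sum_exp_pos[of \<theta>] by (simp add: softmax_component flip: sum_divide_distrib)

lemma softmax_ratio: "softmax \<theta> $ b = softmax \<theta> $ a * exp (\<theta> $ b - \<theta> $ a)"
  by (simp add: softmax_component exp_diff)

lemma softmax_nonneg: "0 \<le> softmax \<theta> $ a"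
  using softmax_pos less_imp_le by blast

lemma softmax_le_if_logit_le:
  assumes "\<theta> $ b \<le> \<theta> $ a"
  shows "softmax \<theta> $ b \<le> softmax \<theta> $ a"
  using assms by (simp add: softmax_component divide_right_mono sum_exp_pos less_imp_le)

lemma softmax_add_le_one:
  assumes "b \<noteq> a"
  shows "softmax \<theta> $ a + softmax \<theta> $ b \<le> 1"
proof -
  have "(\<Sum>x\<in>{a, b}. softmax \<theta> $ x) \<le> (\<Sum>x\<in>UNIV. softmax \<theta> $ x)"
    by (intro sum_mono2) (auto simp: softmax_nonneg)
  then show ?thesis
    using assms by (simp add: sum_softmax)
qed

lemma softmax_less_one:
  assumes "CARD('K) \<ge> 2"
  shows "softmax (\<theta> :: real ^ 'K) $ a < 1"
proof -
  obtain b :: 'K where "b \<noteq> a"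
    using assms by (metis card_2_iff' ex_card)
  then show ?thesis
    using softmax_add_le_one[of b a \<theta>] softmax_pos[of \<theta> b] by linarith
qed

lemma softmax_ge_of_logits_le:
  assumes "\<And>b. \<theta> $ b \<le> \<theta> $ a + U"
  shows "inverse (real CARD('K) * exp U) \<le> softmax (\<theta> :: real ^ 'K) $ a"
proof -
  have "(\<Sum>b\<in>UNIV. exp (\<theta> $ b)) \<le> (\<Sum>b\<in>(UNIV :: 'K set). exp (\<theta> $ a) * exp U)"
    using assms by (intro sum_mono) (simp flip: exp_add)
  then have "(\<Sum>b\<in>UNIV. exp (\<theta> $ b)) \<le> real CARD('K) * exp U * exp (\<theta> $ a)"
    by (simp add: mult_ac)
  then have "exp (\<theta> $ a) / (real CARD('K) * exp U * exp (\<theta> $ a)) \<le> softmax \<theta> $ a"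
    unfolding softmax_component using sum_exp_pos[of \<theta>] by (intro divide_left_mono) auto
  then show ?thesis
    by (simp add: field_simps)
qed

lemma inner_softmax_le_one:
  assumes "\<And>a. r $ a \<le> 1"
  shows "softmax \<theta> \<bullet> r \<le> 1"
proof -
  have "(\<Sum>a\<in>UNIV. softmax \<theta> $ a * r $ a) \<le> (\<Sum>a\<in>UNIV. softmax \<theta> $ a)"
    using assms by (intro sum_mono mult_left_le) (auto simp: softmax_nonneg)
  then show ?thesis
    by (simp add: inner_vec_def sum_softmax)
qed

lemma reward_gap_le_optimal_minus_inner_softmax:
  assumes "\<And>a. a \<noteq> astar \<Longrightarrow> \<Delta> \<le> r $ astar - r $ a"
  shows "(1 - softmax \<theta> $ astar) * \<Delta> \<le> r $ astar - softmax \<theta> \<bullet> r"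
proof -
  let ?p = "\<lambda>a. softmax \<theta> $ a"
  have "(1 - ?p astar) * \<Delta> = (\<Sum>a\<in>UNIV - {astar}. ?p a * \<Delta>)"
    by (simp add: sum_diff1 sum_softmax flip: sum_distrib_right)
  also have "\<dots> \<le> (\<Sum>a\<in>UNIV - {astar}. ?p a * (r $ astar - r $ a))"
    using assms by (intro sum_mono mult_left_mono) (auto simp: softmax_nonneg)
  also have "\<dots> = (\<Sum>a\<in>UNIV. ?p a * (r $ astar - r $ a))"
    by (simp add: sum_diff1)
  also have "\<dots> = r $ astar - softmax \<theta> \<bullet> r"
    by (simp add: inner_vec_def right_diff_distrib sum_subtractf sum_softmax
        flip: sum_distrib_right)
  finally show ?thesis .
qed

lemma sum_pg_grad: "(\<Sum>a\<in>UNIV. pg_grad r \<theta> $ a) = 0"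
  by (simp add: pg_grad_def inner_vec_def right_diff_distrib sum_subtractf sum_softmax
      flip: sum_distrib_right)

lemma pg_grad_ge_neg_softmax:
  assumes "0 \<le> r $ b" and "softmax \<theta> \<bullet> r \<le> 1"
  shows "- softmax \<theta> $ b \<le> pg_grad r \<theta> $ b"
proof -
  have "softmax \<theta> $ b * (-1) \<le> softmax \<theta> $ b * (r $ b - softmax \<theta> \<bullet> r)"
    using assms softmax_pos[of \<theta> b] by (intro mult_left_mono) auto
  then show ?thesis
    by (simp add: pg_grad_def)
qed

lemma pg_grad_less:
  assumes "r $ b < r $ a" and "softmax \<theta> \<bullet> r < r $ a"
    and "softmax \<theta> $ b \<le> softmax \<theta> $ a"
  shows "pg_grad r \<theta> $ b < pg_grad r \<theta> $ a"
proof (cases "r $ b \<le> softmax \<theta> \<bullet> r")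
  case True
  then have "pg_grad r \<theta> $ b \<le> 0"
    using softmax_pos[of \<theta> b] by (simp add: pg_grad_def mult_nonneg_nonpos)
  also have "0 < pg_grad r \<theta> $ a"
    using assms(2) softmax_pos[of \<theta> a] by (simp add: pg_grad_def)
  finally show ?thesis .
next
  case False
  then have "pg_grad r \<theta> $ b \<le> softmax \<theta> $ a * (r $ b - softmax \<theta> \<bullet> r)"
    using assms(3) by (simp add: pg_grad_def mult_right_mono)
  also have "\<dots> < softmax \<theta> $ a * (r $ a - softmax \<theta> \<bullet> r)"
    using assms(1) softmax_pos[of \<theta> a] by simp
  finally show ?thesis
    by (simp add: pg_grad_def)
qed

section \<open>A potential for the logit gaps\<close>

definition npg_step :: "real ^ 'K \<Rightarrow> real \<Rightarrow> real ^ 'K \<Rightarrow> real ^ 'K" where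
  "npg_step r \<eta> \<theta> = \<theta> + (\<eta> / norm (pg_grad r \<theta>)) *\<^sub>R pg_grad r \<theta>"

lemma npg_iter_Suc: "npg_iter r \<eta> \<theta>1 (Suc t) = npg_step r \<eta> (npg_iter r \<eta> \<theta>1 t)"
  by (simp add: npg_step_def Let_def)

definition gap_excess :: "real \<Rightarrow> real \<Rightarrow> real \<Rightarrow> real" where
  "gap_excess c \<eta> u = (if c \<le> u then u - c + 2 * \<eta> else 0)"

definition gap_potential :: "real \<Rightarrow> real \<Rightarrow> 'K \<Rightarrow> real ^ 'K \<Rightarrow> real" where
  "gap_potential c \<eta> astar \<theta> = (\<Sum>b\<in>UNIV - {astar}. gap_excess c \<eta> (\<theta> $ b - \<theta> $ astar))"

lemma gap_excess_nonneg: "0 \<le> \<eta> \<Longrightarrow> 0 \<le> gap_excess c \<eta> u"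
  by (simp add: gap_excess_def)

lemma le_gap_excess: "0 \<le> \<eta> \<Longrightarrow> u \<le> c + gap_excess c \<eta> u"
  by (simp add: gap_excess_def)

lemma gap_excess_increment_le:
  assumes "u < c \<Longrightarrow> d \<le> 0" and "- d \<le> 2 * \<eta>"
  shows "gap_excess c \<eta> (u + d) - gap_excess c \<eta> u \<le> (if c \<le> u then d else 0)"
  using assms by (auto simp: gap_excess_def)

lemma logit_gap_le_gap_potential:
  assumes "b \<noteq> astar" and "0 \<le> \<eta>"
  shows "\<theta> $ b - \<theta> $ astar \<le> c + gap_potential c \<eta> astar \<theta>"
proof -
  have "gap_excess c \<eta> (\<theta> $ b - \<theta> $ astar) \<le> gap_potential c \<eta> astar \<theta>"
    unfolding gap_potential_def using assms gap_excess_nonneg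
    by (intro member_le_sum) auto
  then show ?thesis
    using le_gap_excess[OF assms(2), of "\<theta> $ b - \<theta> $ astar" c] by linarith
qed

context
  fixes r :: "real ^ 'K" and astar :: 'K and \<Delta> c :: real
  assumes card_ge_2: "CARD('K) \<ge> 2"
    and reward_range: "\<And>a. 0 \<le> r $ a \<and> r $ a \<le> 1"
    and gap_pos: "0 < \<Delta>"
    and gap_le: "\<And>a. a \<noteq> astar \<Longrightarrow> \<Delta> \<le> r $ astar - r $ a"
    and threshold_nonpos: "c \<le> 0"
    and threshold_small: "2 * real CARD('K) * exp c \<le> \<Delta>"
begin

lemma inner_softmax_less_optimal: "softmax \<theta> \<bullet> r < r $ astar"
proof -
  have "0 < (1 - softmax \<theta> $ astar) * \<Delta>"
    using softmax_less_one[OF card_ge_2] gap_pos by simp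
  then show ?thesis
    using reward_gap_le_optimal_minus_inner_softmax[OF gap_le, of \<theta>] by linarith
qed

lemma pg_grad_optimal_pos: "0 < pg_grad r \<theta> $ astar"
  using inner_softmax_less_optimal[of \<theta>] softmax_pos[of \<theta> astar] by (simp add: pg_grad_def)

lemma pg_grad_less_optimal:
  assumes "b \<noteq> astar" and "softmax \<theta> $ b \<le> softmax \<theta> $ astar"
  shows "pg_grad r \<theta> $ b < pg_grad r \<theta> $ astar"
  using gap_le[OF assms(1)] gap_pos inner_softmax_less_optimal assms(2)
  by (intro pg_grad_less) auto

lemma sum_pg_grad_gaps_above_le:
  "(\<Sum>b\<in>{b\<in>UNIV - {astar}. c \<le> \<theta> $ b - \<theta> $ astar}. pg_grad r \<theta> $ b - pg_grad r \<theta> $ astar) \<le> 0"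
proof (cases "softmax \<theta> $ astar > 1/2")
  case True
  have "pg_grad r \<theta> $ b < pg_grad r \<theta> $ astar" if "b \<noteq> astar" for b
    using softmax_add_le_one[OF that, of \<theta>] True by (intro pg_grad_less_optimal[OF that]) auto
  then show ?thesis
    by (intro sum_nonpos) (simp add: less_imp_le)
next
  case False
  let ?G = "\<lambda>b. pg_grad r \<theta> $ b" and ?p = "\<lambda>b. softmax \<theta> $ b"
  define A where "A = {b\<in>UNIV - {astar}. c \<le> \<theta> $ b - \<theta> $ astar}"
  define B where "B = {b\<in>UNIV - {astar}. \<theta> $ b - \<theta> $ astar < c}"
  have "?G astar + sum ?G A + sum ?G B = 0"
  proof -
    have "sum ?G (UNIV - {astar}) = sum ?G A + sum ?G B"
      unfolding A_def B_def by (subst sum.union_disjoint[symmetric]) (auto intro: sum.cong)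
    then show ?thesis
      using sum_pg_grad[of r \<theta>] by (simp add: sum_diff1)
  qed
  moreover have "- sum ?p B \<le> sum ?G B"
  proof -
    have "sum (\<lambda>b. - ?p b) B \<le> sum ?G B"
      using reward_range inner_softmax_le_one[of r \<theta>]
      by (intro sum_mono pg_grad_ge_neg_softmax) auto
    then show ?thesis
      by (simp add: sum_negf)
  qed
  moreover have "sum ?p B \<le> real CARD('K) * (exp c * ?p astar)"
  proof -
    have "?p b \<le> exp c * ?p astar" if "b \<in> B" for b
    proof -
      have "exp (\<theta> $ b - \<theta> $ astar) \<le> exp c"
        using that by (simp add: B_def)
      then have "?p astar * exp (\<theta> $ b - \<theta> $ astar) \<le> ?p astar * exp c"
        using softmax_nonneg by (rule mult_left_mono)
      then show ?thesis
        by (simp add: softmax_ratio[of \<theta> b astar] mult.commute)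
    qed
    then have "sum ?p B \<le> real (card B) * (exp c * ?p astar)"
      by (rule sum_bounded_above)
    also have "\<dots> \<le> real CARD('K) * (exp c * ?p astar)"
      using card_mono[of UNIV B] softmax_nonneg[of \<theta> astar]
      by (intro mult_right_mono) auto
    finally show ?thesis .
  qed
  moreover have "real CARD('K) * (exp c * ?p astar) \<le> ?G astar"
  proof -
    have "\<Delta> / 2 \<le> (1 - ?p astar) * \<Delta>"
      using False gap_pos mult_right_mono[of "1/2" "1 - ?p astar" \<Delta>] by simp
    then have "real CARD('K) * exp c \<le> (1 - ?p astar) * \<Delta>"
      using threshold_small by linarith
    then have "real CARD('K) * exp c * ?p astar \<le> (1 - ?p astar) * \<Delta> * ?p astar"
      using softmax_nonneg by (rule mult_right_mono)
    also have "\<dots> \<le> (r $ astar - softmax \<theta> \<bullet> r) * ?p astar"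
      using reward_gap_le_optimal_minus_inner_softmax[OF gap_le] softmax_nonneg
      by (rule mult_right_mono)
    also have "\<dots> = ?G astar"
      by (simp add: pg_grad_def mult.commute)
    finally show ?thesis
      by (simp only: mult.assoc)
  qed
  moreover have "(\<Sum>b\<in>A. ?G b - ?G astar) \<le> sum ?G A"
    using pg_grad_optimal_pos[of \<theta>] by (intro sum_mono) auto
  ultimately show ?thesis
    unfolding A_def by linarith
qed

lemma gap_potential_npg_step:
  assumes "0 \<le> \<eta>"
  shows "gap_potential c \<eta> astar (npg_step r \<eta> \<theta>) \<le> gap_potential c \<eta> astar \<theta>"
proof -
  let ?G = "pg_grad r \<theta>"
  define k where "k = \<eta> / norm ?G"
  define u where "u b = \<theta> $ b - \<theta> $ astar" for b
  define d where "d b = k * (?G $ b - ?G $ astar)" for b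
  have norm_pos: "0 < norm ?G"
    using pg_grad_optimal_pos[of \<theta>] component_le_norm_cart[of ?G astar] by linarith
  then have k: "0 \<le> k" "k * norm ?G = \<eta>"
    using assms by (simp_all add: k_def)
  have step: "npg_step r \<eta> \<theta> $ b - npg_step r \<eta> \<theta> $ astar = u b + d b" for b
    by (simp add: npg_step_def u_def d_def k_def algebra_simps)
  have decrease: "d b \<le> 0" if "b \<noteq> astar" "u b < c" for b
  proof -
    have "softmax \<theta> $ b \<le> softmax \<theta> $ astar"
      using that(2) threshold_nonpos by (intro softmax_le_if_logit_le) (simp add: u_def)
    then have "?G $ b < ?G $ astar"
      by (rule pg_grad_less_optimal[OF that(1)])
    then show ?thesis
      using k(1) by (simp add: d_def mult_nonneg_nonpos)
  qed
  have short: "- d b \<le> 2 * \<eta>" for b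
  proof -
    have "?G $ astar - ?G $ b \<le> 2 * norm ?G"
      using component_le_norm_cart[of ?G astar] component_le_norm_cart[of ?G b] by linarith
    then show ?thesis
      using mult_left_mono[OF _ k(1)] k(2) by (fastforce simp: d_def algebra_simps)
  qed
  have "gap_potential c \<eta> astar (npg_step r \<eta> \<theta>) - gap_potential c \<eta> astar \<theta>
      = (\<Sum>b\<in>UNIV - {astar}. gap_excess c \<eta> (u b + d b) - gap_excess c \<eta> (u b))"
    by (simp add: gap_potential_def step u_def sum_subtractf)
  also have "\<dots> \<le> (\<Sum>b\<in>UNIV - {astar}. if c \<le> u b then d b else 0)"
    using decrease short by (intro sum_mono gap_excess_increment_le) auto
  also have "\<dots> = (\<Sum>b\<in>{b\<in>UNIV - {astar}. c \<le> u b}. d b)"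
    by (rule sum.inter_filter[symmetric]) simp
  also have "\<dots> = k * (\<Sum>b\<in>{b\<in>UNIV - {astar}. c \<le> u b}. ?G $ b - ?G $ astar)"
    by (simp add: d_def sum_distrib_left)
  also have "\<dots> \<le> 0"
    using k(1) sum_pg_grad_gaps_above_le[of \<theta>] by (simp add: u_def mult_nonneg_nonpos)
  finally show ?thesis
    by simp
qed

lemma gap_potential_npg_iter:
  assumes "0 \<le> \<eta>"
  shows "gap_potential c \<eta> astar (npg_iter r \<eta> \<theta>1 t) \<le> gap_potential c \<eta> astar \<theta>1"
proof (induction t)
  case (Suc t)
  have "gap_potential c \<eta> astar (npg_iter r \<eta> \<theta>1 (Suc t))
      \<le> gap_potential c \<eta> astar (npg_iter r \<eta> \<theta>1 t)"
    unfolding npg_iter_Suc by (rule gap_potential_npg_step[OF assms])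
  with Suc.IH show ?case
    by linarith
qed simp

end

lemma reward_gap_exists:
  fixes r :: "real ^ 'K"
  assumes "\<And>a. a \<noteq> astar \<Longrightarrow> r $ a < r $ astar"
  obtains \<Delta> where "0 < \<Delta>" and "\<And>a. a \<noteq> astar \<Longrightarrow> \<Delta> \<le> r $ astar - r $ a"
proof
  let ?gaps = "insert 1 ((\<lambda>a. r $ astar - r $ a) ` (UNIV - {astar}))"
  show "0 < Min ?gaps"
    using assms by (subst Min_gr_iff) auto
  show "Min ?gaps \<le> r $ astar - r $ a" if "a \<noteq> astar" for a
    using that by (intro Min_le) auto
qed

theorem lemma4:
  fixes r \<theta>1 :: "real ^ 'K" and astar :: 'K
  assumes "CARD('K) \<ge> 2"
    and "\<forall>a. 0 \<le> r $ a \<and> r $ a \<le> 1"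
    and "\<forall>a. a \<noteq> astar \<longrightarrow> r $ a < r $ astar"
  shows "(INF t\<in>{1..}. softmax (npg_iter r (1/6) \<theta>1 (t - 1)) $ astar) > 0"
proof -
  obtain \<Delta> where gap: "0 < \<Delta>" "\<And>a. a \<noteq> astar \<Longrightarrow> \<Delta> \<le> r $ astar - r $ a"
    using reward_gap_exists assms(3) by blast
  define c where "c = min 0 (ln (\<Delta> / (2 * real CARD('K))))"
  have c: "c \<le> 0" "2 * real CARD('K) * exp c \<le> \<Delta>"
    using gap(1) by (auto simp: c_def field_simps min_def)
  define \<theta> where "\<theta> t = npg_iter r (1/6) \<theta>1 t" for t
  define U where "U = max 0 (c + gap_potential c (1/6) astar \<theta>1)"
  have "\<theta> t $ b \<le> \<theta> t $ astar + U" for t b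
  proof (cases "b = astar")
    case False
    then have "\<theta> t $ b - \<theta> t $ astar \<le> c + gap_potential c (1/6) astar (\<theta> t)"
      by (intro logit_gap_le_gap_potential) auto
    also have "\<dots> \<le> c + gap_potential c (1/6) astar \<theta>1"
      unfolding \<theta>_def using assms by (intro add_left_mono gap_potential_npg_iter[OF _ _ gap c]) auto
    finally show ?thesis
      by (simp add: U_def)
  qed (simp add: U_def)
  then have "inverse (real CARD('K) * exp U) \<le> softmax (\<theta> t) $ astar" for t
    by (rule softmax_ge_of_logits_le)
  then have "inverse (real CARD('K) * exp U) \<le> (INF t\<in>{1..}. softmax (\<theta> (t - 1)) $ astar)"
    by (intro cINF_greatest) auto
  moreover have "0 < inverse (real CARD('K) * exp U)"
    by simp
  ultimately show ?thesis
    unfolding \<theta>_def by linarith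
qed

end
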